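(* Let $M$ be a matroid on a finite set $E$, with dual $M^*$, and let $\mathcal{C}$ be a family of subsets of $E$. Then $\mathcal{C}$ is a modular cyclic family in $M$ if and only if $\{E\setminus C: C\in\mathcal{C}\}$ is a modular cut in $M^*$.
   Context: A set $X\subseteq E$ is cyclic in $M$ if it is a union of circuits; $\emptyset$ counts as cyclic. A pair $X,Y$ is modular in $M$ if $r(X)+r(Y)=r(X\cap Y)+r(X\cup Y)$. The cyclic sets form a lattice with join $C_1\cup C_2$ and meet $\mathrm{cyc}(C_1\cap C_2)$. Here $\mathrm{cyc}(X)$ is the largest cyclic subset of $X$, obtained by removing the coloops of $M|_X$. A modular cyclic family is a family of cyclic sets that is down-closed in this lattice and contains $X\cup Y$ for every modular pair $X,Y$ of its members. A modular cut of a matroid is a family of flats that is up-closed in the lattice of flats and contains $X\cap Y$ for every modular pair $X,Y$ of its members. *)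

theory Defs
  imports Main
begin

definition matroid :: "'a set \<Rightarrow> 'a set set \<Rightarrow> bool" where
  "matroid E indep \<longleftrightarrow> finite E \<and> (\<forall>I\<in>indep. I \<subseteq> E) \<and> {} \<in> indep
     \<and> (\<forall>I J. J \<in> indep \<longrightarrow> I \<subseteq> J \<longrightarrow> I \<in> indep)
     \<and> (\<forall>I J. I \<in> indep \<longrightarrow> J \<in> indep \<longrightarrow> card I < card J \<longrightarrow>
           (\<exists>x\<in>J - I. insert x I \<in> indep))"

definition mrank :: "'a set set \<Rightarrow> 'a set \<Rightarrow> nat" where
  "mrank indep X = Max (card ` {I. I \<in> indep \<and> I \<subseteq> X})"

definition basis :: "'a set set \<Rightarrow> 'a set \<Rightarrow> bool" where
  "basis indep B \<longleftrightarrow> B \<in> indep \<and> (\<forall>I\<in>indep. B \<subseteq> I \<longrightarrow> I = B)"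

definition dual_indep :: "'a set \<Rightarrow> 'a set set \<Rightarrow> 'a set set" where
  "dual_indep E indep = {I. I \<subseteq> E \<and> (\<exists>B. basis indep B \<and> B \<subseteq> E - I)}"

definition circuit :: "'a set \<Rightarrow> 'a set set \<Rightarrow> 'a set \<Rightarrow> bool" where
  "circuit E indep C \<longleftrightarrow> C \<subseteq> E \<and> C \<notin> indep \<and> (\<forall>x\<in>C. C - {x} \<in> indep)"

text \<open>Cyclic sets: unions of circuits (the empty set is cyclic).\<close>
definition cyclic :: "'a set \<Rightarrow> 'a set set \<Rightarrow> 'a set \<Rightarrow> bool" where
  "cyclic E indep X \<longleftrightarrow> (\<exists>S. (\<forall>C\<in>S. circuit E indep C) \<and> X = \<Union>S)"

definition flat :: "'a set \<Rightarrow> 'a set set \<Rightarrow> 'a set \<Rightarrow> bool" where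
  "flat E indep X \<longleftrightarrow> X \<subseteq> E \<and> (\<forall>e\<in>E - X. mrank indep (insert e X) > mrank indep X)"

definition modular_pair :: "'a set set \<Rightarrow> 'a set \<Rightarrow> 'a set \<Rightarrow> bool" where
  "modular_pair indep X Y \<longleftrightarrow>
     mrank indep X + mrank indep Y = mrank indep (X \<inter> Y) + mrank indep (X \<union> Y)"

definition modular_cyclic_family :: "'a set \<Rightarrow> 'a set set \<Rightarrow> 'a set set \<Rightarrow> bool" where
  "modular_cyclic_family E indep \<C> \<longleftrightarrow>
     (\<forall>C\<in>\<C>. cyclic E indep C)
     \<and> (\<forall>C\<in>\<C>. \<forall>D. cyclic E indep D \<longrightarrow> D \<subseteq> C \<longrightarrow> D \<in> \<C>)
     \<and> (\<forall>X\<in>\<C>. \<forall>Y\<in>\<C>. modular_pair indep X Y \<longrightarrow> X \<union> Y \<in> \<C>)"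

definition modular_cut :: "'a set \<Rightarrow> 'a set set \<Rightarrow> 'a set set \<Rightarrow> bool" where
  "modular_cut E indep \<F> \<longleftrightarrow>
     (\<forall>F\<in>\<F>. flat E indep F)
     \<and> (\<forall>F\<in>\<F>. \<forall>G. flat E indep G \<longrightarrow> F \<subseteq> G \<longrightarrow> G \<in> \<F>)
     \<and> (\<forall>X\<in>\<F>. \<forall>Y\<in>\<F>. modular_pair indep X Y \<longrightarrow> X \<inter> Y \<in> \<F>)"

end

theory Submission
  imports Defs
begin

text \<open>
  A set \<open>X \<subseteq> E\<close> is cyclic iff no element of \<open>X\<close> is a coloop of \<open>M|X\<close>, i.e.
  \<open>r(X - e) = r(X)\<close> for all \<open>e \<in> X\<close>. The rank of the dual is
  \<open>r\<^sup>*(A) = |A| + r(E - A) - r(E)\<close>, so this condition says exactly that adding any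
  \<open>e \<in> X\<close> to \<open>E - X\<close> raises the dual rank: \<open>X\<close> is cyclic in \<open>M\<close> iff \<open>E - X\<close> is a flat
  of \<open>M\<^sup>*\<close>. The same formula shows that \<open>X, Y\<close> is a modular pair of \<open>M\<close> iff
  \<open>E - X, E - Y\<close> is one of \<open>M\<^sup>*\<close>. Complementation in \<open>E\<close> reverses inclusion and
  exchanges unions with intersections, so the three clauses defining a modular cyclic
  family translate one by one into those defining a modular cut.
\<close>

lemma card_le_mrank:
  assumes "finite E" "F \<subseteq> Pow E" "I \<in> F" "I \<subseteq> X"
  shows "card I \<le> mrank F X"
proof -
  have "finite {I \<in> F. I \<subseteq> X}"
    using assms(1,2) by (auto intro: finite_subset[of _ "Pow E"])
  then show ?thesis
    unfolding mrank_def using assms(3,4) by (intro Max_ge) auto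
qed

lemma mrank_witness:
  assumes "finite E" "F \<subseteq> Pow E" "{} \<in> F"
  obtains I where "I \<in> F" "I \<subseteq> X" "card I = mrank F X"
proof -
  have "finite {I \<in> F. I \<subseteq> X}"
    using assms(1,2) by (auto intro: finite_subset[of _ "Pow E"])
  then have "mrank F X \<in> card ` {I \<in> F. I \<subseteq> X}"
    unfolding mrank_def using assms(3) by (intro Max_in) auto
  then show ?thesis
    using that by auto
qed

lemma dual_indep_subset_Pow: "dual_indep E indep \<subseteq> Pow E"
  unfolding dual_indep_def by blast

lemma cyclic_iff_covered_by_circuits:
  "cyclic E indep X \<longleftrightarrow> (\<forall>e\<in>X. \<exists>C. circuit E indep C \<and> e \<in> C \<and> C \<subseteq> X)"
proof
  assume "\<forall>e\<in>X. \<exists>C. circuit E indep C \<and> e \<in> C \<and> C \<subseteq> X"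
  then have "X = \<Union>{C. circuit E indep C \<and> C \<subseteq> X}"
    by blast
  then show "cyclic E indep X"
    unfolding cyclic_def by (intro exI[of _ "{C. circuit E indep C \<and> C \<subseteq> X}"]) auto
qed (auto simp: cyclic_def)

lemma cyclic_subset_ground: "cyclic E indep X \<Longrightarrow> X \<subseteq> E"
  unfolding cyclic_def circuit_def by blast

lemma compl_mem_compl_image_iff:
  assumes "\<C> \<subseteq> Pow E" "X \<subseteq> E"
  shows "E - X \<in> (\<lambda>C. E - C) ` \<C> \<longleftrightarrow> X \<in> \<C>"
proof
  assume "E - X \<in> (\<lambda>C. E - C) ` \<C>"
  then obtain C where "C \<in> \<C>" "E - X = E - C"
    by blast
  moreover have "C \<subseteq> E"
    using \<open>C \<in> \<C>\<close> assms(1) by blast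
  ultimately show "X \<in> \<C>"
    using assms(2) by (metis double_diff order_refl)
qed blast

locale finite_matroid =
  fixes E :: "'a set" and indep :: "'a set set"
  assumes matroid: "matroid E indep"
begin

lemma finite_ground: "finite E"
  using matroid by (simp add: matroid_def)

lemma indep_subset_Pow: "indep \<subseteq> Pow E"
  using matroid by (auto simp: matroid_def)

lemma empty_indep: "{} \<in> indep"
  using matroid by (simp add: matroid_def)

lemma indep_subset_ground: "I \<in> indep \<Longrightarrow> I \<subseteq> E"
  using indep_subset_Pow by blast

lemma indep_subset: "J \<in> indep \<Longrightarrow> I \<subseteq> J \<Longrightarrow> I \<in> indep"
  using matroid unfolding matroid_def by blast

lemma indep_augment:
  "I \<in> indep \<Longrightarrow> J \<in> indep \<Longrightarrow> card I < card J \<Longrightarrow> \<exists>x\<in>J - I. insert x I \<in> indep"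
  using matroid unfolding matroid_def by blast

lemma indep_finite: "I \<in> indep \<Longrightarrow> finite I"
  using indep_subset_Pow finite_ground by (blast intro: finite_subset)

lemma indep_card_le_mrank: "I \<in> indep \<Longrightarrow> I \<subseteq> X \<Longrightarrow> card I \<le> mrank indep X"
  using card_le_mrank[OF finite_ground indep_subset_Pow] .

lemma indep_mrank_witness:
  obtains I where "I \<in> indep" "I \<subseteq> X" "card I = mrank indep X"
  using mrank_witness[OF finite_ground indep_subset_Pow empty_indep] .

lemma mrank_mono: "X \<subseteq> Y \<Longrightarrow> mrank indep X \<le> mrank indep Y"
proof -
  assume "X \<subseteq> Y"
  obtain I where "I \<in> indep" "I \<subseteq> X" "card I = mrank indep X"
    using indep_mrank_witness .
  with \<open>X \<subseteq> Y\<close> show ?thesis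
    using indep_card_le_mrank[of I Y] by simp
qed

lemma indep_extend_to_mrank:
  assumes "J \<in> indep" "J \<subseteq> X"
  obtains I where "I \<in> indep" "J \<subseteq> I" "I \<subseteq> X" "card I = mrank indep X"
proof -
  let ?P = "\<lambda>I. I \<in> indep \<and> J \<subseteq> I \<and> I \<subseteq> X"
  have "\<forall>I. ?P I \<longrightarrow> card I < Suc (mrank indep X)"
    using indep_card_le_mrank by (simp add: less_Suc_eq_le)
  then have "\<exists>I. ?P I \<and> (\<forall>I'. ?P I' \<longrightarrow> card I' \<le> card I)"
    using assms by (intro Lattices_Big.ex_has_greatest_nat[of ?P J]) auto
  then obtain I where I: "?P I" and greatest: "\<And>I'. ?P I' \<Longrightarrow> card I' \<le> card I"
    by blast
  have "\<not> card I < mrank indep X"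
  proof
    assume "card I < mrank indep X"
    moreover obtain K where K: "K \<in> indep" "K \<subseteq> X" "card K = mrank indep X"
      using indep_mrank_witness .
    ultimately obtain x where x: "x \<in> K - I" "insert x I \<in> indep"
      using indep_augment[of I K] I by auto
    have "?P (insert x I)"
      using x K I by blast
    then have "card (insert x I) \<le> card I"
      by (rule greatest)
    moreover have "card (insert x I) = Suc (card I)"
      using x(1) I indep_finite by simp
    ultimately show False
      by simp
  qed
  moreover have "card I \<le> mrank indep X"
    using I indep_card_le_mrank by blast
  ultimately have "card I = mrank indep X"
    by simp
  with I show ?thesis
    using that by blast
qed

lemma basis_iff_card: "basis indep B \<longleftrightarrow> B \<in> indep \<and> card B = mrank indep E"
proof
  assume B: "basis indep B"
  then have "B \<in> indep"
    by (simp add: basis_def)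
  then obtain I where I: "I \<in> indep" "B \<subseteq> I" "card I = mrank indep E"
    using indep_subset_ground[OF \<open>B \<in> indep\<close>] by (rule indep_extend_to_mrank)
  moreover have "I = B"
    using B I(1,2) by (simp add: basis_def)
  ultimately show "B \<in> indep \<and> card B = mrank indep E"
    using \<open>B \<in> indep\<close> by simp
next
  assume B: "B \<in> indep \<and> card B = mrank indep E"
  have "I = B" if "I \<in> indep" "B \<subseteq> I" for I
  proof -
    have "I \<subseteq> E"
      using that(1) by (rule indep_subset_ground)
    then have "card I \<le> card B"
      using B indep_card_le_mrank[OF that(1)] by simp
    moreover have "finite I"
      using that(1) by (rule indep_finite)
    ultimately show ?thesis
      using that(2) card_subset_eq[of I B] card_mono[of I B] by simp
  qed
  with B show "basis indep B"
    by (simp add: basis_def)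
qed

lemma empty_dual_indep: "{} \<in> dual_indep E indep"
proof -
  obtain B where "B \<in> indep" "card B = mrank indep E"
    using indep_mrank_witness .
  then have "basis indep B" "B \<subseteq> E"
    using basis_iff_card indep_subset_ground by auto
  then show ?thesis
    unfolding dual_indep_def by blast
qed

section \<open>The rank function of the dual\<close>

lemma dual_card_le_mrank:
  "I \<in> dual_indep E indep \<Longrightarrow> I \<subseteq> X \<Longrightarrow> card I \<le> mrank (dual_indep E indep) X"
  using card_le_mrank[OF finite_ground dual_indep_subset_Pow] .

lemma dual_mrank_witness:
  obtains I where "I \<in> dual_indep E indep" "I \<subseteq> X" "card I = mrank (dual_indep E indep) X"
  using mrank_witness[OF finite_ground dual_indep_subset_Pow empty_dual_indep] .

lemma mrank_dual_le:
  assumes "A \<subseteq> E"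
  shows "mrank (dual_indep E indep) A + mrank indep E \<le> card A + mrank indep (E - A)"
proof -
  obtain I where I: "I \<in> dual_indep E indep" "I \<subseteq> A" "card I = mrank (dual_indep E indep) A"
    using dual_mrank_witness .
  then obtain B where B: "basis indep B" "B \<subseteq> E - I"
    unfolding dual_indep_def by blast
  then have "B \<in> indep" "card B = mrank indep E"
    using basis_iff_card by auto
  have "finite A" "finite B"
    using finite_subset[OF assms finite_ground] indep_finite[OF \<open>B \<in> indep\<close>] .
  have "card I \<le> card (A - B)"
    using I(2) B(2) \<open>finite A\<close> by (intro card_mono) auto
  moreover have "card A = card (A \<inter> B) + card (A - B)"
    using \<open>finite A\<close> by (rule card_Int_Diff)
  moreover have "card B = card (B \<inter> A) + card (B - A)"
    using \<open>finite B\<close> by (rule card_Int_Diff)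
  moreover have "card (B - A) \<le> mrank indep (E - A)"
  proof (rule indep_card_le_mrank)
    show "B - A \<in> indep"
      using \<open>B \<in> indep\<close> by (rule indep_subset) blast
    show "B - A \<subseteq> E - A"
      using B(2) by blast
  qed
  ultimately show ?thesis
    using I(3) \<open>card B = mrank indep E\<close> by (simp add: Int_commute)
qed

lemma mrank_dual_ge:
  assumes "A \<subseteq> E"
  shows "card A + mrank indep (E - A) \<le> mrank (dual_indep E indep) A + mrank indep E"
proof -
  obtain J where J: "J \<in> indep" "J \<subseteq> E - A" "card J = mrank indep (E - A)"
    using indep_mrank_witness .
  moreover have "J \<subseteq> E"
    using J(2) by blast
  ultimately obtain B where B: "B \<in> indep" "J \<subseteq> B" "B \<subseteq> E" "card B = mrank indep E"
    using indep_extend_to_mrank by blast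
  then have "basis indep B"
    by (simp add: basis_iff_card)
  then have "A - B \<in> dual_indep E indep"
    using assms B(3) unfolding dual_indep_def by blast
  then have "card (A - B) \<le> mrank (dual_indep E indep) A"
    by (rule dual_card_le_mrank) blast
  have "finite A" "finite B"
    using finite_subset[OF assms finite_ground] indep_finite[OF B(1)] .
  have "card J \<le> card (B - A)"
    using J(2) B(2) \<open>finite B\<close> by (intro card_mono) auto
  moreover have "card A = card (A \<inter> B) + card (A - B)"
    using \<open>finite A\<close> by (rule card_Int_Diff)
  moreover have "card B = card (B \<inter> A) + card (B - A)"
    using \<open>finite B\<close> by (rule card_Int_Diff)
  ultimately show ?thesis
    using J(3) B(4) \<open>card (A - B) \<le> _\<close> by (simp add: Int_commute)
qed

lemma mrank_dual:
  "A \<subseteq> E \<Longrightarrow> mrank (dual_indep E indep) A + mrank indep E = card A + mrank indep (E - A)"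
  using mrank_dual_le mrank_dual_ge by (intro antisym)

section \<open>Cyclic sets and flats of the dual\<close>

lemma dependent_contains_circuit:
  assumes "D \<subseteq> E" "D \<notin> indep"
  obtains C where "C \<subseteq> D" "circuit E indep C"
proof -
  obtain C where C: "C \<subseteq> D" "C \<notin> indep"
    and minimal: "\<And>C'. C' \<subseteq> D \<and> C' \<notin> indep \<Longrightarrow> card C \<le> card C'"
    using ex_has_least_nat[of "\<lambda>C. C \<subseteq> D \<and> C \<notin> indep" D card] assms(2) by blast
  have "finite C"
    using finite_subset[OF C(1) finite_subset[OF assms(1) finite_ground]] .
  have "C - {x} \<in> indep" if "x \<in> C" for x
  proof (rule ccontr)
    assume "C - {x} \<notin> indep"
    then have "card C \<le> card (C - {x})"
      using C(1) by (intro minimal) blast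
    then show False
      using card_Diff1_less[OF \<open>finite C\<close> that] by simp
  qed
  with C assms(1) have "circuit E indep C"
    unfolding circuit_def by blast
  with C(1) show ?thesis
    using that by blast
qed

lemma in_circuit_if_mrank_Diff_eq:
  assumes "X \<subseteq> E" "e \<in> X" "mrank indep (X - {e}) = mrank indep X"
  obtains C where "circuit E indep C" "e \<in> C" "C \<subseteq> X"
proof -
  obtain I where I: "I \<in> indep" "I \<subseteq> X - {e}" "card I = mrank indep (X - {e})"
    using indep_mrank_witness .
  have "insert e I \<subseteq> E"
    using I(2) assms(1,2) by blast
  moreover have "insert e I \<notin> indep"
  proof
    assume "insert e I \<in> indep"
    then have "card (insert e I) \<le> mrank indep X"
      using I(2) assms(2) by (intro indep_card_le_mrank) auto
    moreover have "card (insert e I) = Suc (card I)"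
      using I(2) indep_finite[OF I(1)] by (intro card_insert_disjoint) auto
    ultimately show False
      using I(3) assms(3) by simp
  qed
  ultimately obtain C where C: "C \<subseteq> insert e I" "circuit E indep C"
    by (rule dependent_contains_circuit)
  have "e \<in> C"
  proof (rule ccontr)
    assume "e \<notin> C"
    then have "C \<in> indep"
      using C(1) I(1) indep_subset by blast
    with C(2) show False
      by (simp add: circuit_def)
  qed
  moreover have "C \<subseteq> X"
    using C(1) I(2) assms(2) by blast
  ultimately show ?thesis
    using C(2) that by blast
qed

lemma mrank_Diff_eq_if_in_circuit:
  assumes "circuit E indep C" "e \<in> C" "C \<subseteq> X"
  shows "mrank indep (X - {e}) = mrank indep X"
proof (rule antisym)
  show "mrank indep (X - {e}) \<le> mrank indep X"
    by (rule mrank_mono) blast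
  have "C \<notin> indep" "C - {e} \<in> indep"
    using assms(1,2) by (auto simp: circuit_def)
  moreover have "C - {e} \<subseteq> X - {e}"
    using assms(3) by blast
  ultimately obtain I where I: "I \<in> indep" "C - {e} \<subseteq> I" "I \<subseteq> X - {e}"
    "card I = mrank indep (X - {e})"
    by (blast elim: indep_extend_to_mrank)
  show "mrank indep X \<le> mrank indep (X - {e})"
  proof (rule ccontr)
    assume "\<not> ?thesis"
    moreover obtain K where K: "K \<in> indep" "K \<subseteq> X" "card K = mrank indep X"
      using indep_mrank_witness .
    ultimately obtain x where x: "x \<in> K - I" "insert x I \<in> indep"
      using indep_augment[OF I(1) K(1)] I(4) by auto
    show False
    proof (cases "x = e")
      case True
      then have "C \<subseteq> insert x I"
        using I(2) by blast
      then show False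
        using x(2) indep_subset \<open>C \<notin> indep\<close> by blast
    next
      case False
      then have "card (insert x I) \<le> mrank indep (X - {e})"
        using x K(2) I(3) by (intro indep_card_le_mrank) auto
      moreover have "card (insert x I) = Suc (card I)"
        using x(1) indep_finite[OF I(1)] by simp
      ultimately show False
        using I(4) by simp
    qed
  qed
qed

lemma cyclic_iff_mrank_Diff_eq:
  assumes "X \<subseteq> E"
  shows "cyclic E indep X \<longleftrightarrow> (\<forall>e\<in>X. mrank indep (X - {e}) = mrank indep X)"
  unfolding cyclic_iff_covered_by_circuits
  using assms in_circuit_if_mrank_Diff_eq mrank_Diff_eq_if_in_circuit by metis

lemma mrank_dual_compl:
  "X \<subseteq> E \<Longrightarrow>
    mrank (dual_indep E indep) (E - X) + mrank indep E = card (E - X) + mrank indep X"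
  using mrank_dual[of "E - X"] by (simp add: double_diff)

lemma flat_dual_compl_iff:
  assumes "X \<subseteq> E"
  shows "flat E (dual_indep E indep) (E - X) \<longleftrightarrow> (\<forall>e\<in>X. mrank indep (X - {e}) = mrank indep X)"
proof -
  have "mrank (dual_indep E indep) (E - X) < mrank (dual_indep E indep) (insert e (E - X))
      \<longleftrightarrow> mrank indep (X - {e}) = mrank indep X" if "e \<in> X" for e
  proof -
    have "X - {e} \<subseteq> E" "E - (X - {e}) = insert e (E - X)"
      using assms that by blast+
    then have "mrank (dual_indep E indep) (insert e (E - X)) + mrank indep E =
        Suc (card (E - X)) + mrank indep (X - {e})"
      using mrank_dual_compl[of "X - {e}"] that finite_ground by simp
    moreover have "mrank indep (X - {e}) \<le> mrank indep X"
      by (rule mrank_mono) blast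
    ultimately show ?thesis
      using mrank_dual_compl[OF assms] by auto
  qed
  moreover have "E - (E - X) = X"
    using assms by blast
  ultimately show ?thesis
    unfolding flat_def by auto
qed

lemma cyclic_iff_flat_dual_compl:
  "X \<subseteq> E \<Longrightarrow> cyclic E indep X \<longleftrightarrow> flat E (dual_indep E indep) (E - X)"
  by (simp add: cyclic_iff_mrank_Diff_eq flat_dual_compl_iff)

lemma flat_dual_iff_compl_cyclic:
  "flat E (dual_indep E indep) G \<longleftrightarrow> G \<subseteq> E \<and> cyclic E indep (E - G)"
  using cyclic_iff_flat_dual_compl[of "E - G"] by (auto simp: double_diff flat_def)

lemma modular_pair_dual_compl_iff:
  assumes "X \<subseteq> E" "Y \<subseteq> E"
  shows "modular_pair (dual_indep E indep) (E - X) (E - Y) \<longleftrightarrow> modular_pair indep X Y"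
proof -
  have inter: "(E - X) \<inter> (E - Y) = E - (X \<union> Y)" and union: "(E - X) \<union> (E - Y) = E - (X \<inter> Y)"
    by blast+
  have "card (E - X) + card (E - Y) = card (E - (X \<union> Y)) + card (E - (X \<inter> Y))"
    using card_Un_Int[of "E - X" "E - Y"] finite_ground inter union by simp
  moreover have XY: "X \<union> Y \<subseteq> E" "X \<inter> Y \<subseteq> E"
    using assms by blast+
  ultimately show ?thesis
    unfolding modular_pair_def inter union
    using mrank_dual_compl[OF assms(1)] mrank_dual_compl[OF assms(2)]
      mrank_dual_compl[OF XY(1)] mrank_dual_compl[OF XY(2)]
    by linarith
qed

lemma all_cyclic_iff_all_compl_flat_dual:
  assumes "\<C> \<subseteq> Pow E"
  shows "(\<forall>C\<in>\<C>. cyclic E indep C) \<longleftrightarrow> (\<forall>F\<in>(\<lambda>C. E - C) ` \<C>. flat E (dual_indep E indep) F)"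
proof -
  have "C \<subseteq> E" if "C \<in> \<C>" for C
    using that assms by blast
  then show ?thesis
    using cyclic_iff_flat_dual_compl by simp
qed

lemma down_closed_iff_compl_up_closed:
  assumes "\<C> \<subseteq> Pow E"
  shows "(\<forall>C\<in>\<C>. \<forall>D. cyclic E indep D \<longrightarrow> D \<subseteq> C \<longrightarrow> D \<in> \<C>) \<longleftrightarrow>
    (\<forall>F\<in>(\<lambda>C. E - C) ` \<C>. \<forall>G. flat E (dual_indep E indep) G \<longrightarrow> F \<subseteq> G \<longrightarrow>
      G \<in> (\<lambda>C. E - C) ` \<C>)"
proof -
  have flats: "(\<forall>G. flat E (dual_indep E indep) G \<longrightarrow> P G) \<longleftrightarrow> (\<forall>D. cyclic E indep D \<longrightarrow> P (E - D))"
    for P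
  proof
    assume "\<forall>G. flat E (dual_indep E indep) G \<longrightarrow> P G"
    then show "\<forall>D. cyclic E indep D \<longrightarrow> P (E - D)"
      using cyclic_iff_flat_dual_compl[OF cyclic_subset_ground] by blast
  next
    assume "\<forall>D. cyclic E indep D \<longrightarrow> P (E - D)"
    moreover have "E - (E - G) = G" if "G \<subseteq> E" for G
      using that by blast
    ultimately show "\<forall>G. flat E (dual_indep E indep) G \<longrightarrow> P G"
      using flat_dual_iff_compl_cyclic by metis
  qed
  have pointwise: "(D \<subseteq> C \<longrightarrow> D \<in> \<C>) \<longleftrightarrow> (E - C \<subseteq> E - D \<longrightarrow> E - D \<in> (\<lambda>C. E - C) ` \<C>)"
    if "C \<in> \<C>" "cyclic E indep D" for C D
  proof -
    have "D \<subseteq> E" "C \<subseteq> E"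
      using that assms cyclic_subset_ground by blast+
    then have "E - C \<subseteq> E - D \<longleftrightarrow> D \<subseteq> C"
      by blast
    with \<open>D \<subseteq> E\<close> show ?thesis
      using compl_mem_compl_image_iff[OF assms] by simp
  qed
  show ?thesis
    unfolding Ball_image_comp comp_def flats
    by (intro ball_cong all_cong refl) (rule pointwise)
qed

lemma union_closed_iff_compl_inter_closed:
  assumes "\<C> \<subseteq> Pow E"
  shows "(\<forall>X\<in>\<C>. \<forall>Y\<in>\<C>. modular_pair indep X Y \<longrightarrow> X \<union> Y \<in> \<C>) \<longleftrightarrow>
    (\<forall>X\<in>(\<lambda>C. E - C) ` \<C>. \<forall>Y\<in>(\<lambda>C. E - C) ` \<C>.
      modular_pair (dual_indep E indep) X Y \<longrightarrow> X \<inter> Y \<in> (\<lambda>C. E - C) ` \<C>)"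
proof -
  have pointwise:
    "(modular_pair indep X Y \<longrightarrow> X \<union> Y \<in> \<C>) \<longleftrightarrow>
      (modular_pair (dual_indep E indep) (E - X) (E - Y) \<longrightarrow> (E - X) \<inter> (E - Y) \<in> (\<lambda>C. E - C) ` \<C>)"
    if "X \<in> \<C>" "Y \<in> \<C>" for X Y
  proof -
    have "X \<subseteq> E" "Y \<subseteq> E"
      using that assms by blast+
    moreover have "(E - X) \<inter> (E - Y) = E - (X \<union> Y)"
      by blast
    ultimately show ?thesis
      using modular_pair_dual_compl_iff compl_mem_compl_image_iff[OF assms, of "X \<union> Y"] by simp
  qed
  show ?thesis
    unfolding Ball_image_comp comp_def
    by (intro ball_cong refl) (rule pointwise)
qed

end

theorem proposition2p1:
  fixes E :: "'a set" and indep :: "'a set set" and \<C> :: "'a set set"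
  assumes "matroid E indep"
    and "\<forall>C\<in>\<C>. C \<subseteq> E"
  shows "modular_cyclic_family E indep \<C> \<longleftrightarrow>
         modular_cut E (dual_indep E indep) ((\<lambda>C. E - C) ` \<C>)"
proof -
  interpret finite_matroid E indep
    using assms(1) by (rule finite_matroid.intro)
  have "\<C> \<subseteq> Pow E"
    using assms(2) by blast
  then show ?thesis
    unfolding modular_cyclic_family_def modular_cut_def
    by (simp only: all_cyclic_iff_all_compl_flat_dual down_closed_iff_compl_up_closed
      union_closed_iff_compl_inter_closed)
qed

end
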